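(* Let $(\mathscr{P},\mathscr{B},\mathrm{I})$ be a linear space with incidence graph $\Gamma$, let $\varphi$ be a gain function on $\Gamma$ with gain group $G$ acting on the left on a nonempty set $\Lambda$. Then $\mathfrak{M}(\Gamma,\varphi)$ is a generalized quadrangle if and only if for every $p\in\mathscr{P}$ and $b\in\mathscr{B}$ with $p$ not incident with $b$, and every $\lambda\in\Lambda$, the function $\rho_{b,p,\lambda}:\mathscr{P}_b\to\Lambda$ is bijective. Moreover, when $\mathfrak{M}(\Gamma,\varphi)$ is a generalized quadrangle: (1) the set $X=\{x_p : p\in\mathscr{P}\}$ is an ovoid of $\mathfrak{M}(\Gamma,\varphi)$; (2) for every $b\in\mathscr{B}$ the set $\mathscr{P}_b$ has the same cardinality as $\Lambda$; hence $(\mathscr{P},\mathscr{B},\mathrm{I})$ is a Steiner system; (3) if $\mathscr{P}$ is finite, then $\Lambda$ is finite, $|\mathscr{P}|=v\ge 3$, $|\Lambda|=k\ge 2$, and in $\mathfrak{M}(\Gamma,\varphi)$ every line is incident with exactly $1+s$ points and every point is incident with exactly $1+t$ lines, where $s=\frac{v-1}{k-1}$ and $t=k-1$.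
   Context: An incidence structure is a triple $(\mathscr{P},\mathscr{B},\mathrm{I})$ where $\mathscr{P}$ (points) and $\mathscr{B}$ (lines) are nonempty disjoint sets and $\mathrm{I}\subseteq\mathscr{P}\times\mathscr{B}$ is a nonempty incidence relation; write $p\ \mathrm{I}\ b$ or $b\ \mathrm{I}\ p$ when $(p,b)\in\mathrm{I}$, and $\mathscr{P}_b=\{q\in\mathscr{P}: q\ \mathrm{I}\ b\}$. It is a linear space if any two distinct points are incident with exactly one common line, each line is incident with at least two points, and some point and line are not incident. A linear space is a Steiner system if all sets $\mathscr{P}_b$ have the same (possibly infinite) cardinality. The incidence graph $\Gamma$ is the bipartite graph with vertex set $\mathscr{P}\cup\mathscr{B}$ and an edge $bp$ for each incident pair; every edge is oriented from its line to its point. A gain function with gain group $G$ assigns to each edge $e$ an element $\varphi(e)\in G$ (extended to the free group on edges, so $\varphi(e^{-1})=\varphi(e)^{-1}$). For a walk $w=(u_0,e_1,u_1,\dots,e_n,u_n)$ in $\Gamma$, $\varphi_w=\varphi(e_n)^{\delta_n}\cdots\varphi(e_1)^{\delta_1}$ with $\delta_i=1$ if $e_i$ is oriented from $u_{i-1}$ to $u_i$ and $\delta_i=-1$ otherwise. For $b\in\mathscr{B}$, $p\in\mathscr{P}$ with $p$ not incident with $b$, define $\rho_{b,p}:\mathscr{P}_b\to G$ by $\rho_{b,p}(q)=\varphi_w$ where $w=(b,e_1,q,e_2,b',e_3,p)$ and $b'$ is the unique line incident with $p$ and $q$ (so $\rho_{b,p}(q)=\varphi(b'p)\varphi(b'q)^{-1}\varphi(bq)$);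 and for $\lambda\in\Lambda$ define $\rho_{b,p,\lambda}(q)=\rho_{b,p}(q)\cdot\lambda$. Construction $\mathfrak{M}(\Gamma,\varphi)$: the incidence structure whose points are the formal symbols $x_p$ ($p\in\mathscr{P}$) and $y_{b,\lambda}$ ($b\in\mathscr{B},\lambda\in\Lambda$), whose lines are the formal symbols $z_{p,\lambda}$ ($p\in\mathscr{P},\lambda\in\Lambda$), and whose incidences are exactly: $x_p$ incident with $z_{p,\lambda}$ for all $\lambda$, and $y_{b,\lambda}$ incident with $z_{p,\mu}$ whenever $b\ \mathrm{I}\ p$ and $\mu=\varphi(bp)\cdot\lambda$. A $k$-chain is a sequence $(u_0,\dots,u_k)$ of elements with $u_i$ incident with $u_{i-1}$; $d(u,v)$ is the least $k$ admitting a $k$-chain from $u$ to $v$. A generalized quadrangle is an incidence structure with $d(u,v)\le 4$ for all $u,v$ and a unique $k$-chain from $u$ to $v$ whenever $d(u,v)=k<4$. An ovoid of a generalized quadrangle is a set $O$ of points such that each line is incident with exactly one point of $O$. *)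

theory Defs
  imports Complex_Main "HOL-Algebra.Group_Action" "HOL-Library.Equipollence"
begin

text \<open>An incidence structure is given by a point set Pts, a line set Lns (of different
  HOL types, hence disjoint) and an incidence relation Inc of (point, line) pairs.\<close>

definition incidence_structure :: "'p set \<Rightarrow> 'b set \<Rightarrow> ('p \<times> 'b) set \<Rightarrow> bool" where
  "incidence_structure Pts Lns Inc \<longleftrightarrow>
     Pts \<noteq> {} \<and> Lns \<noteq> {} \<and> Inc \<noteq> {} \<and> Inc \<subseteq> Pts \<times> Lns"

definition pts_on :: "'p set \<Rightarrow> ('p \<times> 'b) set \<Rightarrow> 'b \<Rightarrow> 'p set" where
  "pts_on Pts Inc b = {q \<in> Pts. (q, b) \<in> Inc}"

definition linear_space :: "'p set \<Rightarrow> 'b set \<Rightarrow> ('p \<times> 'b) set \<Rightarrow> bool" where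
  "linear_space Pts Lns Inc \<longleftrightarrow>
     incidence_structure Pts Lns Inc \<and>
     (\<forall>p\<in>Pts. \<forall>q\<in>Pts. p \<noteq> q \<longrightarrow> (\<exists>!b. b \<in> Lns \<and> (p, b) \<in> Inc \<and> (q, b) \<in> Inc)) \<and>
     (\<forall>b\<in>Lns. \<exists>p\<in>Pts. \<exists>q\<in>Pts. p \<noteq> q \<and> (p, b) \<in> Inc \<and> (q, b) \<in> Inc) \<and>
     (\<exists>p\<in>Pts. \<exists>b\<in>Lns. (p, b) \<notin> Inc)"

definition steiner_system :: "'p set \<Rightarrow> 'b set \<Rightarrow> ('p \<times> 'b) set \<Rightarrow> bool" where
  "steiner_system Pts Lns Inc \<longleftrightarrow>
     linear_space Pts Lns Inc \<and>
     (\<forall>b\<in>Lns. \<forall>b'\<in>Lns. pts_on Pts Inc b \<approx> pts_on Pts Inc b')"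

fun einc :: "('p \<times> 'b) set \<Rightarrow> 'p + 'b \<Rightarrow> 'p + 'b \<Rightarrow> bool" where
  "einc Inc (Inl p) (Inr b) = ((p, b) \<in> Inc)"
| "einc Inc (Inr b) (Inl p) = ((p, b) \<in> Inc)"
| "einc Inc _ _ = False"

definition elems :: "'p set \<Rightarrow> 'b set \<Rightarrow> ('p + 'b) set" where
  "elems Pts Lns = Inl ` Pts \<union> Inr ` Lns"

definition is_chain :: "'p set \<Rightarrow> 'b set \<Rightarrow> ('p \<times> 'b) set \<Rightarrow> nat \<Rightarrow> 'p + 'b \<Rightarrow> 'p + 'b
    \<Rightarrow> ('p + 'b) list \<Rightarrow> bool" where
  "is_chain Pts Lns Inc k u v cs \<longleftrightarrow>
     length cs = Suc k \<and> set cs \<subseteq> elems Pts Lns \<and> cs ! 0 = u \<and> cs ! k = v \<and>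
     (\<forall>i. 0 < i \<and> i \<le> k \<longrightarrow> einc Inc (cs ! i) (cs ! (i - 1)))"

definition inc_dist :: "'p set \<Rightarrow> 'b set \<Rightarrow> ('p \<times> 'b) set \<Rightarrow> 'p + 'b \<Rightarrow> 'p + 'b \<Rightarrow> nat" where
  "inc_dist Pts Lns Inc u v = (LEAST k. \<exists>cs. is_chain Pts Lns Inc k u v cs)"

definition generalized_quadrangle :: "'p set \<Rightarrow> 'b set \<Rightarrow> ('p \<times> 'b) set \<Rightarrow> bool" where
  "generalized_quadrangle Pts Lns Inc \<longleftrightarrow>
     incidence_structure Pts Lns Inc \<and>
     (\<forall>u\<in>elems Pts Lns. \<forall>v\<in>elems Pts Lns.
        (\<exists>k\<le>4. \<exists>cs. is_chain Pts Lns Inc k u v cs) \<and>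
        (\<forall>k<4. inc_dist Pts Lns Inc u v = k \<longrightarrow> (\<exists>!cs. is_chain Pts Lns Inc k u v cs)))"

definition ovoid :: "'p set \<Rightarrow> 'b set \<Rightarrow> ('p \<times> 'b) set \<Rightarrow> 'p set \<Rightarrow> bool" where
  "ovoid Pts Lns Inc Ov \<longleftrightarrow> Ov \<subseteq> Pts \<and> (\<forall>b\<in>Lns. \<exists>!p. p \<in> Ov \<and> (p, b) \<in> Inc)"

text \<open>A gain function assigns to each edge bp (i.e. incident pair (p,b)) a group element
  phi p b. The unique line through two distinct points:\<close>

definition join :: "'b set \<Rightarrow> ('p \<times> 'b) set \<Rightarrow> 'p \<Rightarrow> 'p \<Rightarrow> 'b" where
  "join Lns Inc p q = (THE b. b \<in> Lns \<and> (p, b) \<in> Inc \<and> (q, b) \<in> Inc)"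

definition rho :: "('g, 'm) monoid_scheme \<Rightarrow> 'b set \<Rightarrow> ('p \<times> 'b) set \<Rightarrow> ('p \<Rightarrow> 'b \<Rightarrow> 'g)
    \<Rightarrow> 'b \<Rightarrow> 'p \<Rightarrow> 'p \<Rightarrow> 'g" where
  "rho G Lns Inc \<phi> b p q =
     (let b' = join Lns Inc p q in \<phi> p b' \<otimes>\<^bsub>G\<^esub> inv\<^bsub>G\<^esub> (\<phi> q b') \<otimes>\<^bsub>G\<^esub> \<phi> q b)"

definition rho_lam :: "('g, 'm) monoid_scheme \<Rightarrow> 'b set \<Rightarrow> ('p \<times> 'b) set \<Rightarrow> ('p \<Rightarrow> 'b \<Rightarrow> 'g)
    \<Rightarrow> ('g \<Rightarrow> 'l \<Rightarrow> 'l) \<Rightarrow> 'b \<Rightarrow> 'p \<Rightarrow> 'l \<Rightarrow> 'p \<Rightarrow> 'l" where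
  "rho_lam G Lns Inc \<phi> act b p lm q = act (rho G Lns Inc \<phi> b p q) lm"

datatype ('p, 'b, 'l) mpoint = XP 'p | YP 'b 'l

text \<open>Lines of M are the symbols z_{p,lambda}, represented as pairs (p, lambda).\<close>

definition M_points :: "'p set \<Rightarrow> 'b set \<Rightarrow> 'l set \<Rightarrow> ('p, 'b, 'l) mpoint set" where
  "M_points Pts Lns Lam = XP ` Pts \<union> {YP b lm | b lm. b \<in> Lns \<and> lm \<in> Lam}"

definition M_lines :: "'p set \<Rightarrow> 'l set \<Rightarrow> ('p \<times> 'l) set" where
  "M_lines Pts Lam = Pts \<times> Lam"

definition M_inc :: "'p set \<Rightarrow> 'b set \<Rightarrow> ('p \<times> 'b) set \<Rightarrow> 'l set \<Rightarrow> ('p \<Rightarrow> 'b \<Rightarrow> 'g)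
    \<Rightarrow> ('g \<Rightarrow> 'l \<Rightarrow> 'l) \<Rightarrow> (('p, 'b, 'l) mpoint \<times> ('p \<times> 'l)) set" where
  "M_inc Pts Lns Inc Lam \<phi> act =
     {(XP p, (p, \<mu>)) | p \<mu>. p \<in> Pts \<and> \<mu> \<in> Lam} \<union>
     {(YP b lm, (p, \<mu>)) | b lm p \<mu>. b \<in> Lns \<and> lm \<in> Lam \<and> (p, b) \<in> Inc \<and> \<mu> = act (\<phi> p b) lm}"

end

theory Submission
  imports Defs
begin

(* In M(Gamma, phi) two points lie on at most one common line, and every point and line is incident
   with something; so it is a generalized quadrangle exactly when every point x and line z not
   through x are joined by a unique 3-chain x, z', y, z. For x = x_p, and for x = y_{b,lambda} with
   z = z_{p',mu'} and p' on b, this chain is forced. For x = y_{b,lambda} with p' off b, the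
   3-chains correspond injectively to the points q of b with rho_{b,p',lambda}(q) = mu': the chain
   passes through z_{q, phi(bq) lambda} and the point of that line over the line joining q and p'.
   Hence uniqueness everywhere means that every rho_{b,p,lambda} is bijective. The remaining claims
   are counting: a line z_{p,mu} carries x_p and one point over each line through p, and in a
   finite linear space whose lines have k points the lines through p partition the other v - 1
   points into blocks of k - 1. *)

section \<open>Chains and generalized quadrangles\<close>

lemma einc_Inl_right [simp]: "einc I a (Inl x) \<longleftrightarrow> (\<exists>M. a = Inr M \<and> (x, M) \<in> I)"
  by (cases a) auto

lemma einc_Inr_right [simp]: "einc I a (Inr M) \<longleftrightarrow> (\<exists>x. a = Inl x \<and> (x, M) \<in> I)"
  by (cases a) auto

lemma Inl_in_elems [simp]: "Inl x \<in> elems P L \<longleftrightarrow> x \<in> P"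
  by (auto simp: elems_def)

lemma Inr_in_elems [simp]: "Inr M \<in> elems P L \<longleftrightarrow> M \<in> L"
  by (auto simp: elems_def)

lemma is_chain_0_iff: "is_chain P L I 0 u v cs \<longleftrightarrow> cs = [u] \<and> u = v \<and> u \<in> elems P L"
  unfolding is_chain_def by (auto simp: length_Suc_conv)

lemma is_chain_Suc_iff:
  "is_chain P L I (Suc k) u v cs \<longleftrightarrow>
     (\<exists>a cs'. cs = u # cs' \<and> u \<in> elems P L \<and> einc I a u \<and> is_chain P L I k a v cs')"
proof
  assume c: "is_chain P L I (Suc k) u v cs"
  then obtain cs' where cs: "cs = u # cs'"
    unfolding is_chain_def by (cases cs) auto
  have "einc I (cs' ! i) (cs' ! (i - 1))" if "0 < i" "i \<le> k" for i
    using c that unfolding is_chain_def cs by (auto simp: nth_Cons')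
  then have "is_chain P L I k (cs' ! 0) v cs'"
    using c unfolding is_chain_def cs by auto
  moreover have "einc I (cs' ! 0) u"
    using c unfolding is_chain_def cs by force
  ultimately show "\<exists>a cs'. cs = u # cs' \<and> u \<in> elems P L \<and> einc I a u \<and> is_chain P L I k a v cs'"
    using c cs unfolding is_chain_def by auto
next
  assume "\<exists>a cs'. cs = u # cs' \<and> u \<in> elems P L \<and> einc I a u \<and> is_chain P L I k a v cs'"
  then obtain a cs' where cs: "cs = u # cs'" and u: "u \<in> elems P L" and a: "einc I a u"
    and c: "is_chain P L I k a v cs'"
    by blast
  have "einc I (cs ! i) (cs ! (i - 1))" if i: "0 < i" "i \<le> Suc k" for i
  proof (cases "i = 1")
    case True
    then show ?thesis
      using a c unfolding is_chain_def cs by auto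
  next
    case False
    then obtain j where "i = Suc j" "0 < j" "j \<le> k"
      using i by (cases i) auto
    then show ?thesis
      using c unfolding is_chain_def cs by (auto simp: nth_Cons')
  qed
  then show "is_chain P L I (Suc k) u v cs"
    using u c unfolding is_chain_def cs by auto
qed

lemma is_chain_1_iff [simp]:
  "is_chain P L I (Suc 0) u v cs \<longleftrightarrow> cs = [u, v] \<and> u \<in> elems P L \<and> v \<in> elems P L \<and> einc I v u"
  by (auto simp: is_chain_Suc_iff is_chain_0_iff)

lemma is_chain_2_iff:
  "is_chain P L I 2 u v cs \<longleftrightarrow>
     (\<exists>a. cs = [u, a, v] \<and> set cs \<subseteq> elems P L \<and> einc I a u \<and> einc I v a)"
  by (auto simp: numeral_eq_Suc is_chain_Suc_iff is_chain_0_iff)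

lemma is_chain_3_iff:
  "is_chain P L I 3 u v cs \<longleftrightarrow>
     (\<exists>a b. cs = [u, a, b, v] \<and> set cs \<subseteq> elems P L \<and> einc I a u \<and> einc I b a \<and> einc I v b)"
  by (auto simp: numeral_eq_Suc is_chain_Suc_iff is_chain_0_iff)

lemma is_chain_4_iff:
  "is_chain P L I 4 u v cs \<longleftrightarrow>
     (\<exists>a b c. cs = [u, a, b, c, v] \<and> set cs \<subseteq> elems P L \<and>
        einc I a u \<and> einc I b a \<and> einc I c b \<and> einc I v c)"
  by (auto simp: numeral_eq_Suc is_chain_Suc_iff is_chain_0_iff)

lemma einc_isl: "einc I a u \<Longrightarrow> isl a \<longleftrightarrow> \<not> isl u"
  by (cases a; cases u) auto

lemma is_chain_even_iff: "is_chain P L I k u v cs \<Longrightarrow> even k \<longleftrightarrow> (isl u \<longleftrightarrow> isl v)"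
  by (induction k arbitrary: u cs) (auto simp: is_chain_0_iff is_chain_Suc_iff dest!: einc_isl)

lemma inc_dist_le: "is_chain P L I k u v cs \<Longrightarrow> inc_dist P L I u v \<le> k"
  unfolding inc_dist_def by (blast intro: Least_le)

lemma inc_dist_chain: "is_chain P L I k u v cs \<Longrightarrow> \<exists>cs. is_chain P L I (inc_dist P L I u v) u v cs"
  unfolding inc_dist_def by (rule LeastI_ex) blast

text \<open>The 3-chains from a point x to a line N, recorded by their middle elements (M, y).\<close>

definition projection_flags :: "'p set \<Rightarrow> 'b set \<Rightarrow> ('p \<times> 'b) set \<Rightarrow> 'p \<Rightarrow> 'b \<Rightarrow> ('b \<times> 'p) set"
  where "projection_flags P L I x N =
    {(M, y). M \<in> L \<and> y \<in> P \<and> (x, M) \<in> I \<and> (y, M) \<in> I \<and> (y, N) \<in> I}"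

lemma is_chain_3_from_point:
  "is_chain P L I 3 (Inl x) v cs \<longleftrightarrow>
     (\<exists>N M y. v = Inr N \<and> x \<in> P \<and> N \<in> L \<and> (M, y) \<in> projection_flags P L I x N \<and>
        cs = [Inl x, Inr M, Inl y, Inr N])"
  by (auto simp: is_chain_3_iff projection_flags_def)

lemma is_chain_3_from_line:
  "is_chain P L I 3 (Inr N) v cs \<longleftrightarrow>
     (\<exists>x M y. v = Inl x \<and> x \<in> P \<and> N \<in> L \<and> (M, y) \<in> projection_flags P L I x N \<and>
        cs = [Inr N, Inl y, Inr M, Inl x])"
  by (auto simp: is_chain_3_iff projection_flags_def)

lemma generalized_quadrangle_projection_flags_singleton:
  assumes gq: "generalized_quadrangle P L I"
    and x: "x \<in> P" and N: "N \<in> L" and nonincident: "(x, N) \<notin> I"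
  shows "is_singleton (projection_flags P L I x N)"
proof -
  have no_short_chain: "3 \<le> k" if "is_chain P L I k (Inl x) (Inr N) cs" for k cs
  proof (rule ccontr)
    assume "\<not> 3 \<le> k"
    then consider "k = 0" | "k = 1" | "k = 2"
      by linarith
    then show False
      using is_chain_even_iff[OF that] that nonincident by cases (auto simp: is_chain_0_iff)
  qed
  obtain k cs where "k \<le> 4" and chain: "is_chain P L I k (Inl x) (Inr N) cs"
    using gq x N unfolding generalized_quadrangle_def by force
  moreover have "odd k"
    using is_chain_even_iff[OF chain] by simp
  ultimately have "k = 3"
    using no_short_chain[OF chain] by presburger
  then have dist: "inc_dist P L I (Inl x) (Inr N) = 3"
    using chain no_short_chain inc_dist_chain inc_dist_le by (meson le_antisym)
  have "Inl x \<in> elems P L" "Inr N \<in> elems P L"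
    using x N by simp_all
  then have "\<forall>k<4. inc_dist P L I (Inl x) (Inr N) = k \<longrightarrow>
      (\<exists>!cs. is_chain P L I k (Inl x) (Inr N) cs)"
    using gq unfolding generalized_quadrangle_def by blast
  then have "\<exists>!cs. is_chain P L I 3 (Inl x) (Inr N) cs"
    using dist by simp
  then show ?thesis
    by (auto simp: is_singleton_iff_ex1 is_chain_3_from_point x N)
qed

lemma is_chain_2_unique:
  assumes no_digon: "\<And>x x' M M'. \<lbrakk>x \<noteq> x'; (x, M) \<in> I; (x', M) \<in> I; (x, M') \<in> I; (x', M') \<in> I\<rbrakk>
      \<Longrightarrow> M = M'"
    and "u \<noteq> v" and "is_chain P L I 2 u v cs" and "is_chain P L I 2 u v cs'"
  shows "cs = cs'"
proof -
  obtain a a' where cs: "cs = [u, a, v]" "cs' = [u, a', v]"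
    and inc: "einc I a u" "einc I v a" "einc I a' u" "einc I v a'"
    using assms(3,4) unfolding is_chain_2_iff by blast
  have "a = a'"
  proof (cases u)
    case (Inl x)
    then obtain x' M M' where "v = Inl x'" "a = Inr M" "a' = Inr M'"
      and "(x, M) \<in> I" "(x', M) \<in> I" "(x, M') \<in> I" "(x', M') \<in> I"
      using inc by auto
    then show ?thesis
      using no_digon \<open>u \<noteq> v\<close> Inl by blast
  next
    case (Inr N)
    then obtain N' y y' where "v = Inr N'" "a = Inl y" "a' = Inl y'"
      and "(y, N) \<in> I" "(y', N) \<in> I" "(y, N') \<in> I" "(y', N') \<in> I"
      using inc by auto
    then show ?thesis
      using no_digon \<open>u \<noteq> v\<close> Inr by blast
  qed
  then show ?thesis
    using cs by simp
qed

lemma is_chain_3_unique: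
  assumes proj: "\<And>x N. \<lbrakk>x \<in> P; N \<in> L; (x, N) \<notin> I\<rbrakk> \<Longrightarrow> is_singleton (projection_flags P L I x N)"
    and "\<not> einc I v u" and "is_chain P L I 3 u v cs" and "is_chain P L I 3 u v cs'"
  shows "cs = cs'"
proof (cases u)
  case (Inl x)
  then obtain N M y M' y' where "v = Inr N" "x \<in> P" "N \<in> L"
    and "(M, y) \<in> projection_flags P L I x N" "cs = [Inl x, Inr M, Inl y, Inr N]"
    and "(M', y') \<in> projection_flags P L I x N" "cs' = [Inl x, Inr M', Inl y', Inr N]"
    using assms(3,4) by (auto simp: is_chain_3_from_point)
  moreover have "is_singleton (projection_flags P L I x N)"
    using proj assms(2) calculation(1-3) Inl by simp
  ultimately show ?thesis
    by (auto simp: is_singleton_def)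
next
  case (Inr N)
  then obtain x M y M' y' where "v = Inl x" "x \<in> P" "N \<in> L"
    and "(M, y) \<in> projection_flags P L I x N" "cs = [Inr N, Inl y, Inr M, Inl x]"
    and "(M', y') \<in> projection_flags P L I x N" "cs' = [Inr N, Inl y', Inr M', Inl x]"
    using assms(3,4) by (auto simp: is_chain_3_from_line)
  moreover have "is_singleton (projection_flags P L I x N)"
    using proj assms(2) calculation(1-3) Inr by simp
  ultimately show ?thesis
    by (auto simp: is_singleton_def)
qed

lemma point_line_chain_exists:
  assumes "x \<in> P" "N \<in> L" and proj: "(x, N) \<notin> I \<Longrightarrow> projection_flags P L I x N \<noteq> {}"
  shows "\<exists>k\<le>3. \<exists>cs. is_chain P L I k (Inl x) (Inr N) cs"
    and "\<exists>k\<le>3. \<exists>cs. is_chain P L I k (Inr N) (Inl x) cs"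
proof -
  have "\<exists>k\<le>3. \<exists>cs. is_chain P L I k (Inl x) (Inr N) cs \<and> is_chain P L I k (Inr N) (Inl x) (rev cs)"
  proof (cases "(x, N) \<in> I")
    case True
    then show ?thesis
      using assms by (intro exI[of _ 1]) auto
  next
    case False
    then obtain M y where "(M, y) \<in> projection_flags P L I x N"
      using proj by auto
    then show ?thesis
      using assms by (intro exI[of _ 3]) (auto simp: is_chain_3_from_point is_chain_3_from_line)
  qed
  then show "\<exists>k\<le>3. \<exists>cs. is_chain P L I k (Inl x) (Inr N) cs"
    and "\<exists>k\<le>3. \<exists>cs. is_chain P L I k (Inr N) (Inl x) cs"
    by blast+
qed

lemma chain_of_length_le_4_exists:
  assumes point_on_line: "\<And>x. x \<in> P \<Longrightarrow> \<exists>M\<in>L. (x, M) \<in> I"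
    and line_on_point: "\<And>M. M \<in> L \<Longrightarrow> \<exists>x\<in>P. (x, M) \<in> I"
    and proj: "\<And>x N. \<lbrakk>x \<in> P; N \<in> L; (x, N) \<notin> I\<rbrakk> \<Longrightarrow> projection_flags P L I x N \<noteq> {}"
    and "u \<in> elems P L" and "v \<in> elems P L"
  shows "\<exists>k\<le>4. \<exists>cs. is_chain P L I k u v cs"
proof -
  have short: "\<exists>k\<le>3. \<exists>cs. is_chain P L I k u' v' cs"
    if "u' \<in> elems P L" "v' \<in> elems P L" "isl u' \<noteq> isl v'" for u' v'
    using that point_line_chain_exists[OF _ _ proj] by (cases u'; cases v') auto
  show ?thesis
  proof (cases "isl u = isl v")
    case False
    then obtain k cs where "k \<le> 3" "is_chain P L I k u v cs"
      using short assms(4,5) by blast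
    then show ?thesis
      by (intro exI[of _ k]) auto
  next
    case True
    obtain a where "a \<in> elems P L" "einc I a u"
      using assms(4) point_on_line line_on_point by (cases u) force+
    moreover from this obtain k cs where "k \<le> 3" "is_chain P L I k a v cs"
      using short assms(5) True einc_isl by metis
    ultimately have "is_chain P L I (Suc k) u v (u # cs)"
      using assms(4) unfolding is_chain_Suc_iff by blast
    then show ?thesis
      using \<open>k \<le> 3\<close> by (intro exI[of _ "Suc k"]) auto
  qed
qed

lemma is_chain_unique_below_4:
  assumes no_digon: "\<And>x x' M M'. \<lbrakk>x \<noteq> x'; (x, M) \<in> I; (x', M) \<in> I; (x, M') \<in> I; (x', M') \<in> I\<rbrakk>
      \<Longrightarrow> M = M'"
    and proj: "\<And>x N. \<lbrakk>x \<in> P; N \<in> L; (x, N) \<notin> I\<rbrakk> \<Longrightarrow> is_singleton (projection_flags P L I x N)"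
    and uv: "u \<in> elems P L" "v \<in> elems P L"
    and cs: "is_chain P L I k u v cs" and "k < 4" and dist: "inc_dist P L I u v = k"
  shows "\<exists>!cs. is_chain P L I k u v cs"
proof -
  consider "k = 0" | "k = 1" | "k = 2" | "k = 3"
    using \<open>k < 4\<close> by linarith
  then show ?thesis
  proof cases
    case 1
    then show ?thesis
      using cs by (auto simp: is_chain_0_iff)
  next
    case 2
    then show ?thesis
      using cs by auto
  next
    case 3
    then have "u \<noteq> v"
      using inc_dist_le[of P L I 0 u v "[u]"] uv dist by (auto simp: is_chain_0_iff)
    then show ?thesis
      using cs 3 is_chain_2_unique[OF no_digon \<open>u \<noteq> v\<close>] by (intro ex1I[of _ cs]) simp_all
  next
    case 4
    then have "\<not> einc I v u"
      using inc_dist_le[of P L I 1 u v "[u, v]"] uv dist by auto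
    then show ?thesis
      using cs 4 is_chain_3_unique[OF proj] by (intro ex1I[of _ cs]) simp_all
  qed
qed

text \<open>Under these side conditions the distances 0, 1 and 2 take care of themselves, and the
  quadrangle axioms reduce to a unique 3-chain from each point to each line not through it.\<close>

lemma generalized_quadrangle_iff_unique_projections:
  assumes incidence: "incidence_structure P L I"
    and point_on_line: "\<And>x. x \<in> P \<Longrightarrow> \<exists>M\<in>L. (x, M) \<in> I"
    and line_on_point: "\<And>M. M \<in> L \<Longrightarrow> \<exists>x\<in>P. (x, M) \<in> I"
    and no_digon: "\<And>x x' M M'. \<lbrakk>x \<noteq> x'; (x, M) \<in> I; (x', M) \<in> I; (x, M') \<in> I; (x', M') \<in> I\<rbrakk>
      \<Longrightarrow> M = M'"
  shows "generalized_quadrangle P L I \<longleftrightarrow>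
    (\<forall>x\<in>P. \<forall>N\<in>L. (x, N) \<notin> I \<longrightarrow> is_singleton (projection_flags P L I x N))"
proof
  assume "generalized_quadrangle P L I"
  then show "\<forall>x\<in>P. \<forall>N\<in>L. (x, N) \<notin> I \<longrightarrow> is_singleton (projection_flags P L I x N)"
    by (intro ballI impI) (rule generalized_quadrangle_projection_flags_singleton)
next
  assume "\<forall>x\<in>P. \<forall>N\<in>L. (x, N) \<notin> I \<longrightarrow> is_singleton (projection_flags P L I x N)"
  then have proj: "\<And>x N. \<lbrakk>x \<in> P; N \<in> L; (x, N) \<notin> I\<rbrakk> \<Longrightarrow> is_singleton (projection_flags P L I x N)"
    by blast
  have exists: "\<exists>k\<le>4. \<exists>cs. is_chain P L I k u v cs" if "u \<in> elems P L" "v \<in> elems P L" for u v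
    using proj by (intro chain_of_length_le_4_exists[OF point_on_line line_on_point _ that])
      (auto simp: is_singleton_def)
  have unique: "\<exists>!cs. is_chain P L I k u v cs"
    if uv: "u \<in> elems P L" "v \<in> elems P L" and k: "k < 4" "inc_dist P L I u v = k" for u v k
  proof -
    obtain cs where cs: "is_chain P L I k u v cs"
      using exists[OF uv] inc_dist_chain k(2) by blast
    show ?thesis
      by (rule is_chain_unique_below_4[OF _ proj uv cs k]) (use no_digon in blast)
  qed
  show "generalized_quadrangle P L I"
    unfolding generalized_quadrangle_def using incidence exists unique by simp
qed

section \<open>Linear spaces\<close>

lemma linear_space_incident_mem:
  "linear_space P L I \<Longrightarrow> (p, b) \<in> I \<Longrightarrow> p \<in> P \<and> b \<in> L"
  unfolding linear_space_def incidence_structure_def by auto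

lemma linear_space_ex1_line:
  "linear_space P L I \<Longrightarrow> p \<in> P \<Longrightarrow> q \<in> P \<Longrightarrow> p \<noteq> q \<Longrightarrow>
    \<exists>!b. b \<in> L \<and> (p, b) \<in> I \<and> (q, b) \<in> I"
  unfolding linear_space_def by blast

lemma linear_space_line_unique:
  assumes lin: "linear_space P L I" and "p \<noteq> q"
    and "(p, b) \<in> I" "(q, b) \<in> I" "(p, b') \<in> I" "(q, b') \<in> I"
  shows "b = b'"
proof -
  have "p \<in> P" "q \<in> P" "b \<in> L" "b' \<in> L"
    using assms(3-6) linear_space_incident_mem[OF lin] by auto
  then have "\<exists>!b. b \<in> L \<and> (p, b) \<in> I \<and> (q, b) \<in> I"
    using linear_space_ex1_line[OF lin] \<open>p \<noteq> q\<close> by simp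
  then show ?thesis
    using assms(3-6) \<open>b \<in> L\<close> \<open>b' \<in> L\<close> by (simp add: Ex1_def) blast
qed

lemma join_incident:
  assumes "linear_space P L I" "p \<in> P" "q \<in> P" "p \<noteq> q"
  shows "join L I p q \<in> L \<and> (p, join L I p q) \<in> I \<and> (q, join L I p q) \<in> I"
  unfolding join_def by (rule theI'[OF linear_space_ex1_line[OF assms]])

lemma join_eqI:
  assumes lin: "linear_space P L I" and "p \<noteq> q" "(p, b) \<in> I" "(q, b) \<in> I"
  shows "join L I p q = b"
proof -
  have "p \<in> P" "q \<in> P" "b \<in> L"
    using assms(3,4) linear_space_incident_mem[OF lin] by auto
  then show ?thesis
    using join_incident[OF lin _ _ \<open>p \<noteq> q\<close>] linear_space_line_unique[OF lin \<open>p \<noteq> q\<close>] assms(3,4)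
    by simp
qed

lemma linear_space_two_points_on_line:
  "linear_space P L I \<Longrightarrow> b \<in> L \<Longrightarrow> \<exists>p q. p \<noteq> q \<and> (p, b) \<in> I \<and> (q, b) \<in> I"
  unfolding linear_space_def by blast

lemma linear_space_point_off_line:
  assumes lin: "linear_space P L I" and b: "b \<in> L"
  shows "\<exists>p\<in>P. (p, b) \<notin> I"
proof -
  obtain p0 b0 where p0: "p0 \<in> P" "b0 \<in> L" "(p0, b0) \<notin> I"
    using lin unfolding linear_space_def by blast
  obtain q q' where q: "q \<noteq> q'" "(q, b0) \<in> I" "(q', b0) \<in> I"
    using linear_space_two_points_on_line[OF lin \<open>b0 \<in> L\<close>] by blast
  show ?thesis
  proof (rule ccontr)
    assume "\<not> (\<exists>p\<in>P. (p, b) \<notin> I)"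
    then have all: "\<And>p. p \<in> P \<Longrightarrow> (p, b) \<in> I"
      by blast
    then have "b = b0"
      using linear_space_line_unique[OF lin q(1) _ _ q(2,3)] linear_space_incident_mem[OF lin] q
      by blast
    then show False
      using p0 all by blast
  qed
qed

lemma linear_space_card_points_ge_3:
  assumes lin: "linear_space P L I" and "finite P"
  shows "3 \<le> card P"
proof -
  obtain b where "b \<in> L"
    using lin unfolding linear_space_def incidence_structure_def by blast
  obtain q q' where "q \<noteq> q'" "(q, b) \<in> I" "(q', b) \<in> I"
    using linear_space_two_points_on_line[OF lin \<open>b \<in> L\<close>] by blast
  moreover obtain p where "p \<in> P" "(p, b) \<notin> I"
    using linear_space_point_off_line[OF lin \<open>b \<in> L\<close>] by blast
  moreover have "p \<noteq> q" "p \<noteq> q'"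
    using calculation by auto
  ultimately have "card {p, q, q'} = 3" and sub: "{p, q, q'} \<subseteq> P"
    using linear_space_incident_mem[OF lin] by auto
  then show ?thesis
    using card_mono[OF \<open>finite P\<close> sub] by simp
qed

lemma linear_space_card_pts_on_ge_2:
  assumes lin: "linear_space P L I" and "finite P" and "b \<in> L"
  shows "2 \<le> card (pts_on P I b)"
proof -
  obtain q q' where "q \<noteq> q'" "(q, b) \<in> I" "(q', b) \<in> I"
    using linear_space_two_points_on_line[OF lin \<open>b \<in> L\<close>] by blast
  then have "card {q, q'} = 2" and sub: "{q, q'} \<subseteq> pts_on P I b"
    using linear_space_incident_mem[OF lin] unfolding pts_on_def by auto
  moreover have "finite (pts_on P I b)"
    using \<open>finite P\<close> unfolding pts_on_def by simp
  ultimately show ?thesis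
    using card_mono[OF _ sub] by simp
qed

lemma linear_space_lines_partition_points:
  assumes lin: "linear_space P L I" and p: "p \<in> P"
  shows "P - {p} = (\<Union>b\<in>{b \<in> L. (p, b) \<in> I}. pts_on P I b - {p})"
proof
  show "P - {p} \<subseteq> (\<Union>b\<in>{b \<in> L. (p, b) \<in> I}. pts_on P I b - {p})"
  proof
    fix q assume "q \<in> P - {p}"
    then have "join L I p q \<in> {b \<in> L. (p, b) \<in> I}" "q \<in> pts_on P I (join L I p q) - {p}"
      using join_incident[OF lin p, of q] unfolding pts_on_def by auto
    then show "q \<in> (\<Union>b\<in>{b \<in> L. (p, b) \<in> I}. pts_on P I b - {p})"
      by blast
  qed
qed (auto simp: pts_on_def)

lemma linear_space_lines_through_point:
  assumes lin: "linear_space P L I" and fin: "finite P" and p: "p \<in> P"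
    and size: "\<And>b. b \<in> L \<Longrightarrow> card (pts_on P I b) = k"
  shows "finite {b \<in> L. (p, b) \<in> I}" and "card {b \<in> L. (p, b) \<in> I} * (k - 1) = card P - 1"
proof -
  let ?Lp = "{b \<in> L. (p, b) \<in> I}"
  let ?A = "\<lambda>b. pts_on P I b - {p}"
  have "?Lp \<subseteq> join L I p ` (P - {p})"
  proof
    fix b assume b: "b \<in> ?Lp"
    then obtain q1 q2 where "q1 \<noteq> q2" "(q1, b) \<in> I" "(q2, b) \<in> I"
      using linear_space_two_points_on_line[OF lin] by blast
    then obtain q where "q \<noteq> p" "(q, b) \<in> I"
      by metis
    then show "b \<in> join L I p ` (P - {p})"
      using b join_eqI[OF lin, of p q b] linear_space_incident_mem[OF lin] by force
  qed
  then show fin_Lp: "finite ?Lp"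
    using fin finite_subset by blast
  have "card (P - {p}) = (\<Sum>b\<in>?Lp. card (?A b))"
    unfolding linear_space_lines_partition_points[OF lin p]
  proof (rule card_UN_disjoint[OF fin_Lp])
    show "\<forall>b\<in>?Lp. finite (?A b)"
      using fin unfolding pts_on_def by simp
    show "\<forall>b\<in>?Lp. \<forall>b'\<in>?Lp. b \<noteq> b' \<longrightarrow> ?A b \<inter> ?A b' = {}"
    proof (intro ballI impI)
      fix b b' assume "b \<in> ?Lp" "b' \<in> ?Lp" "b \<noteq> b'"
      then show "?A b \<inter> ?A b' = {}"
        using linear_space_line_unique[OF lin, of _ p b b'] unfolding pts_on_def by blast
    qed
  qed
  also have "\<dots> = (\<Sum>b\<in>?Lp. k - 1)"
    using size p unfolding pts_on_def by (intro sum.cong) (auto simp: card_Diff_singleton_if)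
  finally show "card ?Lp * (k - 1) = card P - 1"
    using p fin by simp
qed

lemma steiner_systemI:
  assumes "linear_space P L I" and "\<And>b. b \<in> L \<Longrightarrow> pts_on P I b \<approx> X"
  shows "steiner_system P L I"
proof -
  have "pts_on P I b \<approx> pts_on P I b'" if "b \<in> L" "b' \<in> L" for b b'
    using eqpoll_trans[OF assms(2)[OF that(1)] eqpoll_sym[OF assms(2)[OF that(2)]]] .
  then show ?thesis
    unfolding steiner_system_def using assms(1) by blast
qed

lemma bij_betw_iff_singleton_fibres:
  assumes "f ` A \<subseteq> B"
  shows "bij_betw f A B \<longleftrightarrow> (\<forall>y\<in>B. is_singleton {x \<in> A. f x = y})"
proof
  assume bij: "bij_betw f A B"
  show "\<forall>y\<in>B. is_singleton {x \<in> A. f x = y}"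
  proof
    fix y assume "y \<in> B"
    then obtain x where "x \<in> A" "f x = y"
      using bij unfolding bij_betw_def by blast
    then show "is_singleton {x \<in> A. f x = y}"
      using bij unfolding bij_betw_def inj_on_def by (intro is_singletonI') auto
  qed
next
  assume fibres: "\<forall>y\<in>B. is_singleton {x \<in> A. f x = y}"
  have "inj_on f A"
  proof (rule inj_onI)
    fix x x' assume "x \<in> A" "x' \<in> A" "f x = f x'"
    moreover obtain a where "{z \<in> A. f z = f x} = {a}"
      using fibres assms \<open>x \<in> A\<close> unfolding is_singleton_def by blast
    ultimately show "x = x'"
      by (metis (mono_tags, lifting) mem_Collect_eq singletonD)
  qed
  moreover have "B \<subseteq> f ` A"
  proof
    fix y assume "y \<in> B"
    then obtain a where "{x \<in> A. f x = y} = {a}"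
      using fibres unfolding is_singleton_def by blast
    then have "a \<in> {x \<in> A. f x = y}"
      by simp
    then show "y \<in> f ` A"
      by blast
  qed
  ultimately show "bij_betw f A B"
    using assms unfolding bij_betw_def by blast
qed

lemma is_singleton_image_iff: "inj_on f A \<Longrightarrow> is_singleton (f ` A) \<longleftrightarrow> is_singleton A"
  by (simp add: is_singleton_altdef card_image)

lemma (in group_action) action_one: "x \<in> E \<Longrightarrow> \<phi> \<one> x = x"
  using fun_cong[OF id_eq_one, of x] by simp

lemma (in group_action) action_inv_cancel:
  assumes "g \<in> carrier G" "x \<in> E"
  shows "\<phi> (inv g) (\<phi> g x) = x" and "\<phi> g (\<phi> (inv g) x) = x"
proof -
  interpret group G
    using group_hom group_hom.axioms(1) by auto
  show "\<phi> (inv g) (\<phi> g x) = x" "\<phi> g (\<phi> (inv g) x) = x"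
    using composition_rule[OF assms(2) inv_closed[OF assms(1)] assms(1)]
      composition_rule[OF assms(2) assms(1) inv_closed[OF assms(1)]] action_one assms by simp_all
qed

section \<open>The construction M(Gamma, phi)\<close>

locale gain_linear_space =
  fixes Pts :: "'p set" and Lns :: "'b set" and Inc :: "('p \<times> 'b) set"
    and G :: "('g, 'm) monoid_scheme" and \<phi> :: "'p \<Rightarrow> 'b \<Rightarrow> 'g"
    and Lam :: "'l set" and act :: "'g \<Rightarrow> 'l \<Rightarrow> 'l"
  assumes linear: "linear_space Pts Lns Inc"
    and gain: "\<And>p b. (p, b) \<in> Inc \<Longrightarrow> \<phi> p b \<in> carrier G"
    and action: "group_action G Lam act"
    and Lam_ne: "Lam \<noteq> {}"
begin

interpretation Act: group_action G Lam act
  by (rule action)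

interpretation G: group G
  using Act.group_hom group_hom.axioms(1) by blast

abbreviation "Mpts \<equiv> M_points Pts Lns Lam"
abbreviation "Mlns \<equiv> M_lines Pts Lam"
abbreviation "Minc \<equiv> M_inc Pts Lns Inc Lam \<phi> act"
abbreviation "\<rho> \<equiv> rho_lam G Lns Inc \<phi> act"

lemma incident_mem: "(p, b) \<in> Inc \<Longrightarrow> p \<in> Pts \<and> b \<in> Lns"
  by (rule linear_space_incident_mem[OF linear])

lemma act_gain_closed: "(q, b) \<in> Inc \<Longrightarrow> l \<in> Lam \<Longrightarrow> act (\<phi> q b) l \<in> Lam"
  using Act.element_image gain by blast

lemma Mpts_iff [simp]:
  "XP p \<in> Mpts \<longleftrightarrow> p \<in> Pts"
  "YP b l \<in> Mpts \<longleftrightarrow> b \<in> Lns \<and> l \<in> Lam"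
  by (auto simp: M_points_def)

lemma Mlns_iff [simp]: "(q, \<mu>) \<in> Mlns \<longleftrightarrow> q \<in> Pts \<and> \<mu> \<in> Lam"
  by (auto simp: M_lines_def)

lemma Minc_iff [simp]:
  "(XP p, (q, \<mu>)) \<in> Minc \<longleftrightarrow> p = q \<and> p \<in> Pts \<and> \<mu> \<in> Lam"
  "(YP b l, (q, \<mu>)) \<in> Minc \<longleftrightarrow> b \<in> Lns \<and> l \<in> Lam \<and> (q, b) \<in> Inc \<and> \<mu> = act (\<phi> q b) l"
  by (auto simp: M_inc_def)

text \<open>For q on b, the point of the line z_{q,\<mu>} of M lying over b is YP b (lift q b \<mu>).\<close>

definition lift :: "'p \<Rightarrow> 'b \<Rightarrow> 'l \<Rightarrow> 'l"
  where "lift q b \<mu> = act (inv\<^bsub>G\<^esub> (\<phi> q b)) \<mu>"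

lemma lift_in_Lam: "(q, b) \<in> Inc \<Longrightarrow> \<mu> \<in> Lam \<Longrightarrow> lift q b \<mu> \<in> Lam"
  unfolding lift_def using Act.element_image G.inv_closed gain by blast

lemma lift_act: "(q, b) \<in> Inc \<Longrightarrow> l \<in> Lam \<Longrightarrow> lift q b (act (\<phi> q b) l) = l"
  unfolding lift_def using Act.action_inv_cancel(1) gain by blast

lemma act_lift: "(q, b) \<in> Inc \<Longrightarrow> \<mu> \<in> Lam \<Longrightarrow> act (\<phi> q b) (lift q b \<mu>) = \<mu>"
  unfolding lift_def using Act.action_inv_cancel(2) gain by blast

lemma YP_on_line_iff:
  assumes "(q, b) \<in> Inc" "\<mu> \<in> Lam"
  shows "(YP b l, (q, \<mu>)) \<in> Minc \<longleftrightarrow> l = lift q b \<mu>"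
  using assms incident_mem lift_in_Lam lift_act act_lift by auto

lemma rho_lam_eq_lift:
  assumes "(q, b) \<in> Inc" "p \<in> Pts" "p \<noteq> q" "l \<in> Lam"
  shows "\<rho> b p l q = act (\<phi> p (join Lns Inc p q)) (lift q (join Lns Inc p q) (act (\<phi> q b) l))"
proof -
  define b' where "b' = join Lns Inc p q"
  have "(p, b') \<in> Inc" "(q, b') \<in> Inc"
    using join_incident[OF linear \<open>p \<in> Pts\<close> _ \<open>p \<noteq> q\<close>] incident_mem[OF assms(1)]
    unfolding b'_def by auto
  then have "\<phi> p b' \<in> carrier G" "inv\<^bsub>G\<^esub> (\<phi> q b') \<in> carrier G" "\<phi> q b \<in> carrier G"
    using gain assms by auto
  then show ?thesis
    unfolding rho_lam_def rho_def lift_def Let_def b'_def[symmetric]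
    using act_gain_closed assms by (simp add: Act.composition_rule)
qed

lemma rho_lam_in_Lam:
  assumes "q \<in> pts_on Pts Inc b" "p \<in> Pts" "(p, b) \<notin> Inc" "l \<in> Lam"
  shows "\<rho> b p l q \<in> Lam"
proof -
  have "(q, b) \<in> Inc" "p \<noteq> q"
    using assms unfolding pts_on_def by auto
  moreover have "(q, join Lns Inc p q) \<in> Inc" "(p, join Lns Inc p q) \<in> Inc"
    using join_incident[OF linear \<open>p \<in> Pts\<close> _ \<open>p \<noteq> q\<close>] incident_mem calculation by auto
  ultimately show ?thesis
    using rho_lam_eq_lift assms act_gain_closed lift_in_Lam by simp
qed

lemma M_incidence_structure: "incidence_structure Mpts Mlns Minc"
proof -
  obtain p l where "p \<in> Pts" "l \<in> Lam"
    using linear Lam_ne unfolding linear_space_def incidence_structure_def by blast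
  then have "(XP p, (p, l)) \<in> Minc" "XP p \<in> Mpts" "(p, l) \<in> Mlns"
    by simp_all
  moreover have "Minc \<subseteq> Mpts \<times> Mlns"
    unfolding M_inc_def using incident_mem act_gain_closed by auto
  ultimately show ?thesis
    unfolding incidence_structure_def by blast
qed

lemma M_point_on_line: "x \<in> Mpts \<Longrightarrow> \<exists>z\<in>Mlns. (x, z) \<in> Minc"
proof (cases x)
  case (XP p)
  moreover obtain l where "l \<in> Lam"
    using Lam_ne by blast
  ultimately show "x \<in> Mpts \<Longrightarrow> ?thesis"
    by (intro bexI[of _ "(p, l)"]) auto
next
  case (YP b l)
  assume "x \<in> Mpts"
  then obtain q where "(q, b) \<in> Inc"
    using linear_space_two_points_on_line[OF linear] YP by auto
  then show ?thesis
    using YP \<open>x \<in> Mpts\<close> incident_mem act_gain_closed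
    by (intro bexI[of _ "(q, act (\<phi> q b) l)"]) auto
qed

lemma M_line_on_point: "z \<in> Mlns \<Longrightarrow> \<exists>x\<in>Mpts. (x, z) \<in> Minc"
  by (cases z) (auto intro!: bexI[of _ "XP (fst z)"])

lemma M_no_digon:
  assumes "x \<noteq> x'" "(x, z) \<in> Minc" "(x', z) \<in> Minc" "(x, z') \<in> Minc" "(x', z') \<in> Minc"
  shows "z = z'"
proof -
  obtain q \<mu> q' \<mu>' where z: "z = (q, \<mu>)" "z' = (q', \<mu>')"
    by (cases z, cases z') auto
  show ?thesis
  proof (cases x; cases x')
    fix b l b' l' assume x: "x = YP b l" "x' = YP b' l'"
    have "q = q'"
    proof (rule ccontr)
      assume "q \<noteq> q'"
      then have "b = b'"
        using assms x z linear_space_line_unique[OF linear, of q q' b b'] by simp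
      moreover have "(q, b) \<in> Inc" "\<mu> \<in> Lam"
        using assms(2) x z act_gain_closed by auto
      ultimately have "l = l'"
        using YP_on_line_iff assms(2,3) x z by simp
      then show False
        using \<open>b = b'\<close> x \<open>x \<noteq> x'\<close> by simp
    qed
    then show ?thesis
      using assms x z by simp
  qed (use assms z in auto)
qed

lemma projection_flags_XP:
  assumes "p \<noteq> p'" "(p, b) \<in> Inc" "(p', b) \<in> Inc" "\<mu>' \<in> Lam"
  shows "projection_flags Mpts Mlns Minc (XP p) (p', \<mu>') =
    {((p, act (\<phi> p b) (lift p' b \<mu>')), YP b (lift p' b \<mu>'))}"
proof
  show "projection_flags Mpts Mlns Minc (XP p) (p', \<mu>') \<subseteq>
    {((p, act (\<phi> p b) (lift p' b \<mu>')), YP b (lift p' b \<mu>'))}"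
  proof
    fix f assume "f \<in> projection_flags Mpts Mlns Minc (XP p) (p', \<mu>')"
    then obtain \<mu> y where f: "f = ((p, \<mu>), y)"
      and y: "(y, (p, \<mu>)) \<in> Minc" "(y, (p', \<mu>')) \<in> Minc"
      unfolding projection_flags_def by auto
    then obtain b1 l1 where y_YP: "y = YP b1 l1"
      using \<open>p \<noteq> p'\<close> by (cases y) auto
    then have "(p, b1) \<in> Inc" "(p', b1) \<in> Inc"
      using y by auto
    then have "b1 = b"
      using linear_space_line_unique[OF linear \<open>p \<noteq> p'\<close>] assms(2,3) by blast
    moreover have "l1 = lift p' b \<mu>'"
      using y y_YP calculation lift_act assms(3) by auto
    ultimately show "f \<in> {((p, act (\<phi> p b) (lift p' b \<mu>')), YP b (lift p' b \<mu>'))}"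
      using f y y_YP by simp
  qed
  show "{((p, act (\<phi> p b) (lift p' b \<mu>')), YP b (lift p' b \<mu>'))} \<subseteq>
    projection_flags Mpts Mlns Minc (XP p) (p', \<mu>')"
    using assms incident_mem lift_in_Lam act_gain_closed act_lift
    unfolding projection_flags_def by auto
qed

lemma projection_flags_YP_on:
  assumes "(p', b) \<in> Inc" "l \<in> Lam" "\<mu>' \<in> Lam" "\<mu>' \<noteq> act (\<phi> p' b) l"
  shows "projection_flags Mpts Mlns Minc (YP b l) (p', \<mu>') = {((p', act (\<phi> p' b) l), XP p')}"
proof
  show "projection_flags Mpts Mlns Minc (YP b l) (p', \<mu>') \<subseteq> {((p', act (\<phi> p' b) l), XP p')}"
  proof
    fix f assume "f \<in> projection_flags Mpts Mlns Minc (YP b l) (p', \<mu>')"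
    then obtain q y where f: "f = ((q, act (\<phi> q b) l), y)" and "(q, b) \<in> Inc"
      and y: "(y, (q, act (\<phi> q b) l)) \<in> Minc" "(y, (p', \<mu>')) \<in> Minc"
      unfolding projection_flags_def by auto
    have "y = XP p'"
    proof (cases y)
      case (YP b1 l1)
      then have "(q, b1) \<in> Inc" "(p', b1) \<in> Inc" "\<mu>' = act (\<phi> p' b1) l1"
        using y by auto
      moreover have "q \<noteq> p'"
        using y YP assms(4) \<open>(q, b) \<in> Inc\<close> by auto
      ultimately have "b1 = b"
        using linear_space_line_unique[OF linear] assms(1) \<open>(q, b) \<in> Inc\<close> by metis
      moreover have "act (\<phi> q b1) l1 = act (\<phi> q b) l" "l1 \<in> Lam"
        using y YP by auto
      ultimately have "l1 = l"
        using lift_act \<open>(q, b) \<in> Inc\<close> assms(2) by metis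
      then show ?thesis
        using assms(4) \<open>b1 = b\<close> \<open>\<mu>' = act (\<phi> p' b1) l1\<close> by simp
    qed (use y in auto)
    then show "f \<in> {((p', act (\<phi> p' b) l), XP p')}"
      using f y by simp
  qed
  show "{((p', act (\<phi> p' b) l), XP p')} \<subseteq> projection_flags Mpts Mlns Minc (YP b l) (p', \<mu>')"
    using assms incident_mem act_gain_closed unfolding projection_flags_def by auto
qed

text \<open>The 3-chain from YP b l to a line z_{p',_} that passes through the point q of b: the line
  z_{q,\<mu>} of M through YP b l over q, and its point over the line joining q and p'.\<close>

definition flag_through :: "'b \<Rightarrow> 'l \<Rightarrow> 'p \<Rightarrow> 'p \<Rightarrow> ('p \<times> 'l) \<times> ('p, 'b, 'l) mpoint"
  where "flag_through b l p' q =
    (let b' = join Lns Inc p' q; \<mu> = act (\<phi> q b) l in ((q, \<mu>), YP b' (lift q b' \<mu>)))"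

lemma inj_on_flag_through: "inj_on (flag_through b l p') A"
  by (rule inj_onI) (simp add: flag_through_def Let_def)

lemma projection_flags_YP_off_subset:
  assumes "l \<in> Lam" "p' \<in> Pts" "(p', b) \<notin> Inc"
  shows "projection_flags Mpts Mlns Minc (YP b l) (p', \<mu>') \<subseteq>
    flag_through b l p' ` {q \<in> pts_on Pts Inc b. \<rho> b p' l q = \<mu>'}"
proof
  fix f assume "f \<in> projection_flags Mpts Mlns Minc (YP b l) (p', \<mu>')"
  then obtain q y where f: "f = ((q, act (\<phi> q b) l), y)" and "(q, b) \<in> Inc"
    and y: "(y, (q, act (\<phi> q b) l)) \<in> Minc" "(y, (p', \<mu>')) \<in> Minc"
    unfolding projection_flags_def by auto
  have "q \<noteq> p'"
    using assms(3) \<open>(q, b) \<in> Inc\<close> by auto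
  then obtain b1 l1 where y_YP: "y = YP b1 l1"
    using y by (cases y) auto
  then have "(q, b1) \<in> Inc" "(p', b1) \<in> Inc" "\<mu>' = act (\<phi> p' b1) l1"
    and "(YP b1 l1, (q, act (\<phi> q b) l)) \<in> Minc"
    using y by auto
  moreover have b1: "b1 = join Lns Inc p' q"
    using join_eqI[OF linear, of p' q b1] \<open>q \<noteq> p'\<close> calculation by simp
  ultimately have l1: "l1 = lift q b1 (act (\<phi> q b) l)"
    using YP_on_line_iff act_gain_closed \<open>(q, b) \<in> Inc\<close> assms(1) by blast
  have "\<rho> b p' l q = \<mu>'"
    using rho_lam_eq_lift[OF \<open>(q, b) \<in> Inc\<close> assms(2) \<open>q \<noteq> p'\<close>[symmetric] assms(1)]
      b1 l1 \<open>\<mu>' = act (\<phi> p' b1) l1\<close> by simp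
  then show "f \<in> flag_through b l p' ` {q \<in> pts_on Pts Inc b. \<rho> b p' l q = \<mu>'}"
    using f y_YP b1 l1 \<open>(q, b) \<in> Inc\<close> incident_mem unfolding pts_on_def
    by (intro image_eqI[of _ _ q]) (auto simp: flag_through_def Let_def)
qed

lemma flag_through_in_projection_flags:
  assumes "b \<in> Lns" "l \<in> Lam" "p' \<in> Pts" "(p', b) \<notin> Inc"
    and "(q, b) \<in> Inc" "\<rho> b p' l q = \<mu>'"
  shows "flag_through b l p' q \<in> projection_flags Mpts Mlns Minc (YP b l) (p', \<mu>')"
proof -
  define b1 \<mu> where "b1 = join Lns Inc p' q" and "\<mu> = act (\<phi> q b) l"
  have "q \<noteq> p'"
    using assms(4,5) by auto
  then have b1: "(p', b1) \<in> Inc" "(q, b1) \<in> Inc"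
    using join_incident[OF linear assms(3), of q] incident_mem assms(5) unfolding b1_def by auto
  have "\<mu> \<in> Lam"
    unfolding \<mu>_def using act_gain_closed assms(2,5) by blast
  moreover have "\<mu>' = act (\<phi> p' b1) (lift q b1 \<mu>)"
    using rho_lam_eq_lift[OF assms(5,3) \<open>q \<noteq> p'\<close>[symmetric] assms(2)] assms(6)
    unfolding b1_def \<mu>_def by simp
  moreover have "flag_through b l p' q = ((q, \<mu>), YP b1 (lift q b1 \<mu>))"
    unfolding flag_through_def Let_def b1_def \<mu>_def ..
  ultimately show ?thesis
    using b1 assms \<mu>_def incident_mem lift_in_Lam act_lift unfolding projection_flags_def by auto
qed

lemma projection_flags_YP_off:
  assumes "b \<in> Lns" "l \<in> Lam" "p' \<in> Pts" "(p', b) \<notin> Inc"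
  shows "projection_flags Mpts Mlns Minc (YP b l) (p', \<mu>') =
    flag_through b l p' ` {q \<in> pts_on Pts Inc b. \<rho> b p' l q = \<mu>'}"
  using projection_flags_YP_off_subset[OF assms(2-4)] flag_through_in_projection_flags[OF assms]
  unfolding pts_on_def by blast

lemma projection_flags_XP_singleton:
  assumes "p \<in> Pts" "p' \<in> Pts" "p \<noteq> p'" "\<mu>' \<in> Lam"
  shows "is_singleton (projection_flags Mpts Mlns Minc (XP p) (p', \<mu>'))"
  using projection_flags_XP[OF \<open>p \<noteq> p'\<close>] join_incident[OF linear assms(1-3)] assms(4) by auto

lemma projection_flags_YP_singleton_iff:
  assumes "b \<in> Lns" "l \<in> Lam" "p' \<in> Pts" "\<mu>' \<in> Lam" "(YP b l, (p', \<mu>')) \<notin> Minc"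
  shows "is_singleton (projection_flags Mpts Mlns Minc (YP b l) (p', \<mu>')) \<longleftrightarrow>
    (p', b) \<in> Inc \<or> is_singleton {q \<in> pts_on Pts Inc b. \<rho> b p' l q = \<mu>'}"
proof (cases "(p', b) \<in> Inc")
  case True
  then have "\<mu>' \<noteq> act (\<phi> p' b) l"
    using assms by auto
  then show ?thesis
    using projection_flags_YP_on[OF True assms(2,4)] True by simp
next
  case False
  then show ?thesis
    using projection_flags_YP_off[OF assms(1-3) False]
      is_singleton_image_iff[OF inj_on_flag_through] by simp
qed

lemma M_unique_projections_iff:
  "(\<forall>x\<in>Mpts. \<forall>z\<in>Mlns. (x, z) \<notin> Minc \<longrightarrow> is_singleton (projection_flags Mpts Mlns Minc x z)) \<longleftrightarrow>
   (\<forall>p\<in>Pts. \<forall>b\<in>Lns. (p, b) \<notin> Inc \<longrightarrow>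
      (\<forall>l\<in>Lam. \<forall>\<mu>\<in>Lam. is_singleton {q \<in> pts_on Pts Inc b. \<rho> b p l q = \<mu>}))"
  (is "?M \<longleftrightarrow> ?R")
proof
  assume M: ?M
  show ?R
  proof (intro ballI impI)
    fix p b l \<mu> assume "p \<in> Pts" "b \<in> Lns" "(p, b) \<notin> Inc" "l \<in> Lam" "\<mu> \<in> Lam"
    then show "is_singleton {q \<in> pts_on Pts Inc b. \<rho> b p l q = \<mu>}"
      using M[rule_format, of "YP b l" "(p, \<mu>)"] projection_flags_YP_singleton_iff by simp
  qed
next
  assume R: ?R
  show ?M
  proof (intro ballI impI)
    fix x z assume "x \<in> Mpts" "z \<in> Mlns" "(x, z) \<notin> Minc"
    moreover obtain p' \<mu>' where z: "z = (p', \<mu>')"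
      by (cases z) auto
    ultimately show "is_singleton (projection_flags Mpts Mlns Minc x z)"
      using R projection_flags_XP_singleton projection_flags_YP_singleton_iff
      by (cases x) auto
  qed
qed

theorem M_generalized_quadrangle_iff:
  "generalized_quadrangle Mpts Mlns Minc \<longleftrightarrow>
    (\<forall>p\<in>Pts. \<forall>b\<in>Lns. (p, b) \<notin> Inc \<longrightarrow> (\<forall>l\<in>Lam. bij_betw (\<rho> b p l) (pts_on Pts Inc b) Lam))"
proof -
  have "generalized_quadrangle Mpts Mlns Minc \<longleftrightarrow>
    (\<forall>x\<in>Mpts. \<forall>z\<in>Mlns. (x, z) \<notin> Minc \<longrightarrow> is_singleton (projection_flags Mpts Mlns Minc x z))"
    using generalized_quadrangle_iff_unique_projections[OF M_incidence_structure
        M_point_on_line M_line_on_point M_no_digon] .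
  also have "\<dots> \<longleftrightarrow> (\<forall>p\<in>Pts. \<forall>b\<in>Lns. (p, b) \<notin> Inc \<longrightarrow>
      (\<forall>l\<in>Lam. \<forall>\<mu>\<in>Lam. is_singleton {q \<in> pts_on Pts Inc b. \<rho> b p l q = \<mu>}))"
    by (rule M_unique_projections_iff)
  also have "\<dots> \<longleftrightarrow>
    (\<forall>p\<in>Pts. \<forall>b\<in>Lns. (p, b) \<notin> Inc \<longrightarrow> (\<forall>l\<in>Lam. bij_betw (\<rho> b p l) (pts_on Pts Inc b) Lam))"
  proof -
    have "bij_betw (\<rho> b p l) (pts_on Pts Inc b) Lam \<longleftrightarrow>
        (\<forall>\<mu>\<in>Lam. is_singleton {q \<in> pts_on Pts Inc b. \<rho> b p l q = \<mu>})"
      if "p \<in> Pts" "(p, b) \<notin> Inc" "l \<in> Lam" for p b l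
      by (rule bij_betw_iff_singleton_fibres) (use rho_lam_in_Lam that in blast)
    then show ?thesis
      by simp
  qed
  finally show ?thesis .
qed

lemma M_ovoid: "ovoid Mpts Mlns Minc (XP ` Pts)"
  unfolding ovoid_def
proof (intro conjI ballI)
  show "XP ` Pts \<subseteq> Mpts"
    by auto
  fix z assume "z \<in> Mlns"
  then obtain q \<mu> where "z = (q, \<mu>)" "q \<in> Pts" "\<mu> \<in> Lam"
    by (cases z) auto
  then show "\<exists>!x. x \<in> XP ` Pts \<and> (x, z) \<in> Minc"
    by (intro ex1I[of _ "XP q"]) auto
qed

lemma pts_on_eqpoll_Lam:
  assumes gq: "generalized_quadrangle Mpts Mlns Minc" and b: "b \<in> Lns"
  shows "pts_on Pts Inc b \<approx> Lam"
proof -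
  obtain p where "p \<in> Pts" "(p, b) \<notin> Inc"
    using linear_space_point_off_line[OF linear b] by blast
  moreover obtain l where "l \<in> Lam"
    using Lam_ne by blast
  ultimately show ?thesis
    using gq b unfolding M_generalized_quadrangle_iff eqpoll_def by blast
qed

lemma M_points_on_line:
  assumes "p \<in> Pts" "\<mu> \<in> Lam"
  shows "{x \<in> Mpts. (x, (p, \<mu>)) \<in> Minc} =
    insert (XP p) ((\<lambda>b. YP b (lift p b \<mu>)) ` {b \<in> Lns. (p, b) \<in> Inc})"
proof
  show "{x \<in> Mpts. (x, (p, \<mu>)) \<in> Minc} \<subseteq>
    insert (XP p) ((\<lambda>b. YP b (lift p b \<mu>)) ` {b \<in> Lns. (p, b) \<in> Inc})"
  proof
    fix x assume x: "x \<in> {x \<in> Mpts. (x, (p, \<mu>)) \<in> Minc}"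
    show "x \<in> insert (XP p) ((\<lambda>b. YP b (lift p b \<mu>)) ` {b \<in> Lns. (p, b) \<in> Inc})"
    proof (cases x)
      case (YP b l)
      then have "(p, b) \<in> Inc" "b \<in> Lns" "l = lift p b \<mu>"
        using x YP_on_line_iff assms(2) by auto
      then show ?thesis
        using YP by blast
    qed (use x in auto)
  qed
  show "insert (XP p) ((\<lambda>b. YP b (lift p b \<mu>)) ` {b \<in> Lns. (p, b) \<in> Inc}) \<subseteq>
    {x \<in> Mpts. (x, (p, \<mu>)) \<in> Minc}"
    using assms lift_in_Lam act_lift by auto
qed

lemma M_line_size:
  assumes fin: "finite Pts" and size: "\<And>b. b \<in> Lns \<Longrightarrow> card (pts_on Pts Inc b) = k"
    and "2 \<le> k" and "z \<in> Mlns"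
  shows "finite {x \<in> Mpts. (x, z) \<in> Minc} \<and>
    real (card {x \<in> Mpts. (x, z) \<in> Minc}) = 1 + (real (card Pts) - 1) / (real k - 1)"
proof -
  obtain p \<mu> where z: "z = (p, \<mu>)" and "p \<in> Pts" "\<mu> \<in> Lam"
    using \<open>z \<in> Mlns\<close> by (cases z) auto
  let ?Lp = "{b \<in> Lns. (p, b) \<in> Inc}"
  have "finite ?Lp" and count: "card ?Lp * (k - 1) = card Pts - 1"
    using linear_space_lines_through_point[OF linear fin \<open>p \<in> Pts\<close> size] by auto
  have "card {x \<in> Mpts. (x, z) \<in> Minc} = Suc (card ?Lp)"
    unfolding z M_points_on_line[OF \<open>p \<in> Pts\<close> \<open>\<mu> \<in> Lam\<close>]
    using \<open>finite ?Lp\<close> by (subst card_insert_disjoint) (auto simp: card_image inj_on_def)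
  moreover have "1 \<le> card Pts"
    using fin \<open>p \<in> Pts\<close> by (metis One_nat_def Suc_leI card_gt_0_iff empty_iff)
  then have "real (card ?Lp) * (real k - 1) = real (card Pts) - 1"
    using arg_cong[OF count, of real] \<open>2 \<le> k\<close> by (simp add: of_nat_diff)
  ultimately show ?thesis
    using \<open>finite ?Lp\<close> \<open>2 \<le> k\<close> unfolding z M_points_on_line[OF \<open>p \<in> Pts\<close> \<open>\<mu> \<in> Lam\<close>]
    by (simp add: field_simps)
qed

lemma M_lines_through_point_eqpoll:
  assumes eqpoll: "\<And>b. b \<in> Lns \<Longrightarrow> pts_on Pts Inc b \<approx> Lam" and "x \<in> Mpts"
  shows "{z \<in> Mlns. (x, z) \<in> Minc} \<approx> Lam"
proof (cases x)
  case (XP p)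
  then have "{z \<in> Mlns. (x, z) \<in> Minc} = Pair p ` Lam"
    using \<open>x \<in> Mpts\<close> by auto
  then show ?thesis
    using inj_on_image_eqpoll_self[of "Pair p" Lam] by (simp add: inj_on_def)
next
  case (YP b l)
  then have "b \<in> Lns"
    and lines: "{z \<in> Mlns. (x, z) \<in> Minc} = (\<lambda>q. (q, act (\<phi> q b) l)) ` pts_on Pts Inc b"
    using \<open>x \<in> Mpts\<close> incident_mem act_gain_closed unfolding pts_on_def by auto
  have "(\<lambda>q. (q, act (\<phi> q b) l)) ` pts_on Pts Inc b \<approx> pts_on Pts Inc b"
    by (rule inj_on_image_eqpoll_self) (simp add: inj_on_def)
  then show ?thesis
    unfolding lines using eqpoll[OF \<open>b \<in> Lns\<close>] by (rule eqpoll_trans)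
qed

lemma M_finite_parameters:
  assumes eqpoll: "\<And>b. b \<in> Lns \<Longrightarrow> pts_on Pts Inc b \<approx> Lam" and fin: "finite Pts"
  shows "finite Lam \<and> 2 \<le> card Lam \<and>
    (\<forall>z\<in>Mlns. finite {x \<in> Mpts. (x, z) \<in> Minc} \<and>
       real (card {x \<in> Mpts. (x, z) \<in> Minc}) = 1 + (real (card Pts) - 1) / (real (card Lam) - 1)) \<and>
    (\<forall>x\<in>Mpts. finite {z \<in> Mlns. (x, z) \<in> Minc} \<and>
       card {z \<in> Mlns. (x, z) \<in> Minc} = 1 + (card Lam - 1))"
proof -
  obtain b0 where "b0 \<in> Lns"
    using linear unfolding linear_space_def incidence_structure_def by blast
  have fin_pts_on: "finite (pts_on Pts Inc b)" for b
    using fin unfolding pts_on_def by simp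
  have "finite Lam"
    using eqpoll_finite_iff[OF eqpoll[OF \<open>b0 \<in> Lns\<close>]] fin_pts_on by blast
  have size: "card (pts_on Pts Inc b) = card Lam" if "b \<in> Lns" for b
    using eqpoll_iff_card[OF fin_pts_on \<open>finite Lam\<close>] eqpoll that by blast
  have "2 \<le> card Lam"
    using linear_space_card_pts_on_ge_2[OF linear fin \<open>b0 \<in> Lns\<close>] size[OF \<open>b0 \<in> Lns\<close>] by simp
  moreover have "finite {z \<in> Mlns. (x, z) \<in> Minc} \<and> card {z \<in> Mlns. (x, z) \<in> Minc} = card Lam"
    if "x \<in> Mpts" for x
    using M_lines_through_point_eqpoll[OF eqpoll that] eqpoll_finite_iff eqpoll_iff_card
      \<open>finite Lam\<close> by blast
  ultimately show ?thesis
    using \<open>finite Lam\<close> M_line_size[OF fin size] by simp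
qed

end

theorem theorem5:
  fixes Pts :: "'p set" and Lns :: "'b set" and Inc :: "('p \<times> 'b) set"
    and G :: "('g, 'm) monoid_scheme" and \<phi> :: "'p \<Rightarrow> 'b \<Rightarrow> 'g"
    and Lam :: "'l set" and act :: "'g \<Rightarrow> 'l \<Rightarrow> 'l"
  assumes lin: "linear_space Pts Lns Inc"
    and grp: "group G"
    and gain: "\<And>p b. (p, b) \<in> Inc \<Longrightarrow> \<phi> p b \<in> carrier G"
    and action: "group_action G Lam act"
    and Lam_ne: "Lam \<noteq> {}"
  defines "MP \<equiv> M_points Pts Lns Lam"
    and "ML \<equiv> M_lines Pts Lam"
    and "MI \<equiv> M_inc Pts Lns Inc Lam \<phi> act"
  shows "(generalized_quadrangle MP ML MI \<longleftrightarrow>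
           (\<forall>p\<in>Pts. \<forall>b\<in>Lns. (p, b) \<notin> Inc \<longrightarrow>
              (\<forall>lm\<in>Lam. bij_betw (rho_lam G Lns Inc \<phi> act b p lm) (pts_on Pts Inc b) Lam)))
         \<and> (generalized_quadrangle MP ML MI \<longrightarrow>
           ovoid MP ML MI (XP ` Pts)
         \<and> (\<forall>b\<in>Lns. pts_on Pts Inc b \<approx> Lam)
         \<and> steiner_system Pts Lns Inc
         \<and> (finite Pts \<longrightarrow>
              finite Lam \<and> card Pts \<ge> 3 \<and> card Lam \<ge> 2 \<and>
              (\<forall>z\<in>ML. finite {x\<in>MP. (x, z) \<in> MI} \<and>
                 real (card {x\<in>MP. (x, z) \<in> MI})
                   = 1 + (real (card Pts) - 1) / (real (card Lam) - 1)) \<and>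
              (\<forall>x\<in>MP. finite {z\<in>ML. (x, z) \<in> MI} \<and>
                 card {z\<in>ML. (x, z) \<in> MI} = 1 + (card Lam - 1))))"
proof -
  interpret gain_linear_space Pts Lns Inc G \<phi> Lam act
    by (rule gain_linear_space.intro[OF lin gain action Lam_ne])
  have eqpoll: "\<And>b. b \<in> Lns \<Longrightarrow> pts_on Pts Inc b \<approx> Lam" if "generalized_quadrangle MP ML MI"
    using pts_on_eqpoll_Lam that unfolding assms(6-8) by blast
  show ?thesis
    using M_generalized_quadrangle_iff M_ovoid eqpoll steiner_systemI[OF lin eqpoll]
      linear_space_card_points_ge_3[OF lin] M_finite_parameters[OF eqpoll]
    unfolding assms(6-8) by blast
qed

end
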